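(* For $n \ge 3$, if $n \pmod 6 \notin \{2,4\}$, then the path $P_n$ is not $\gamma_{\rm tg}$-critical.
   Context: Total domination game: Dominator and Staller alternately choose vertices, each chosen vertex must be adjacent to some vertex not yet totally dominated; the game ends when no legal move exists; Dominator minimizes, Staller maximizes the number of moves; $\gamma_{\rm tg}(G)$ is the number of moves in the Dominator-start game under optimal play. $G|v$ is $G$ with $v$ declared already totally dominated, with $\gamma_{\rm tg}(G|v)$ defined analogously. $G$ is $\gamma_{\rm tg}$-critical if $\gamma_{\rm tg}(G|v)<\gamma_{\rm tg}(G)$ for all vertices $v$. *)

theory Defs
  imports Main
begin

text \<open>A finite graph is given by its vertex set V and open-neighbourhood map N
  (N v \<subseteq> V, symmetric, irreflexive). A game state is the set D of vertices that are
  already totally dominated. The value below is the number of remaining moves under optimal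
  play (Dominator minimises, Staller maximises). The fuel argument k bounds the recursion;
  since every move totally dominates at least one new vertex of V, fuel card V is never
  exhausted, so it does not affect the value.\<close>

fun tg_val :: "'a set \<Rightarrow> ('a \<Rightarrow> 'a set) \<Rightarrow> 'a set \<Rightarrow> bool \<Rightarrow> nat \<Rightarrow> nat" where
  "tg_val V N D dom_turn 0 = 0"
| "tg_val V N D dom_turn (Suc k) =
     (let M = {v \<in> V. N v - D \<noteq> {}} in
      if M = {} then 0
      else if dom_turn then Suc (Min ((\<lambda>v. tg_val V N (D \<union> N v) False k) ` M))
      else Suc (Max ((\<lambda>v. tg_val V N (D \<union> N v) True k) ` M)))"

definition gamma_tg :: "'a set \<Rightarrow> ('a \<Rightarrow> 'a set) \<Rightarrow> nat" where
  "gamma_tg V N = tg_val V N {} True (card V)"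

text \<open>gamma_tg(G|v): Dominator-start game with v declared already totally dominated.\<close>
definition gamma_tg_cond :: "'a set \<Rightarrow> ('a \<Rightarrow> 'a set) \<Rightarrow> 'a \<Rightarrow> nat" where
  "gamma_tg_cond V N v = tg_val V N {v} True (card V)"

definition gamma_tg_critical :: "'a set \<Rightarrow> ('a \<Rightarrow> 'a set) \<Rightarrow> bool" where
  "gamma_tg_critical V N \<longleftrightarrow> (\<forall>v\<in>V. gamma_tg_cond V N v < gamma_tg V N)"

definition path_nbr :: "nat \<Rightarrow> nat \<Rightarrow> nat set" where
  "path_nbr n i = {j. j < n \<and> i < n \<and> (j + 1 = i \<or> i + 1 = j)}"

end

(*
  A move v of P_n totally dominates v - 1 and v + 1, two consecutive vertices of the parity
  class of v + 1; the two classes never interact. A position is thus a pair of boolean words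
  (entry True: not yet totally dominated), and a move dominates two adjacent entries of one
  word, or a single entry at an end of a class. Give each maximal run of L undominated entries
  the weight 2 (L - (L + 1) div 3), plus 1 if L mod 3 = 2 and an end of the run can be
  dominated on its own. This potential drops by 1 to 3 per move, Dominator can make it drop by
  at least 2, Staller by at most 2, and from an odd value either player can make it drop by 1
  or by 3. Hence the Dominator-start game lasts half the potential, rounded down. For
  n mod 6 in {0, 1, 3, 5}, declaring the vertex 2, 3, 0, 0 respectively totally dominated
  leaves the potential unchanged or lowers it from an odd value by 1, so the game value does
  not drop.
*)

theory Submission
  imports Defs
begin

abbreviation tg_moves :: "'a set \<Rightarrow> ('a \<Rightarrow> 'a set) \<Rightarrow> 'a set \<Rightarrow> 'a set" where
  "tg_moves V N D \<equiv> {v \<in> V. N v - D \<noteq> {}}"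

locale tg_potential =
  fixes V :: "'a set" and N :: "'a \<Rightarrow> 'a set" and Psi :: "'a set \<Rightarrow> nat"
  assumes finite_V: "finite V"
    and nbr_subset: "v \<in> V \<Longrightarrow> N v \<subseteq> V"
    and terminal: "D \<subseteq> V \<Longrightarrow> tg_moves V N D = {} \<Longrightarrow> Psi D = 0"
    and move_bounds: "D \<subseteq> V \<Longrightarrow> v \<in> tg_moves V N D \<Longrightarrow>
      Psi (D \<union> N v) + 1 \<le> Psi D \<and> Psi D \<le> Psi (D \<union> N v) + 3"
    and drop_ge2: "D \<subseteq> V \<Longrightarrow> tg_moves V N D \<noteq> {} \<Longrightarrow>
      \<exists>v\<in>tg_moves V N D. Psi (D \<union> N v) + 2 \<le> Psi D"
    and drop_le2: "D \<subseteq> V \<Longrightarrow> tg_moves V N D \<noteq> {} \<Longrightarrow>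
      \<exists>v\<in>tg_moves V N D. Psi D \<le> Psi (D \<union> N v) + 2"
    and odd_drop3: "D \<subseteq> V \<Longrightarrow> odd (Psi D) \<Longrightarrow> \<exists>v\<in>tg_moves V N D. Psi D = Psi (D \<union> N v) + 3"
    and odd_drop1: "D \<subseteq> V \<Longrightarrow> odd (Psi D) \<Longrightarrow> \<exists>v\<in>tg_moves V N D. Psi D = Psi (D \<union> N v) + 1"
begin

lemma Min_after_move:
  assumes D: "D \<subseteq> V" and ne: "tg_moves V N D \<noteq> {}"
  shows "Min ((\<lambda>v. (Psi (D \<union> N v) + 1) div 2) ` tg_moves V N D) + 1 = Psi D div 2"
proof -
  let ?f = "\<lambda>v. (Psi (D \<union> N v) + 1) div 2"
  have "Min (?f ` tg_moves V N D) = Psi D div 2 - 1"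
  proof (rule Min_eqI)
    show "finite (?f ` tg_moves V N D)" using finite_V by simp
    show "Psi D div 2 - 1 \<le> y" if "y \<in> ?f ` tg_moves V N D" for y
      using that move_bounds[OF D] by fastforce
    show "Psi D div 2 - 1 \<in> ?f ` tg_moves V N D"
    proof (cases "odd (Psi D)")
      case True
      then obtain v where "v \<in> tg_moves V N D" "Psi D = Psi (D \<union> N v) + 3"
        using odd_drop3[OF D] by blast
      then show ?thesis using True by (intro image_eqI[of _ _ v]) presburger+
    next
      case False
      obtain v where "v \<in> tg_moves V N D" "Psi (D \<union> N v) + 2 \<le> Psi D"
        using drop_ge2[OF D ne] by blast
      moreover from this have "Psi D \<le> Psi (D \<union> N v) + 3" using move_bounds[OF D] by blast
      ultimately show ?thesis using False by (intro image_eqI[of _ _ v]) presburger+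
    qed
  qed
  moreover have "Psi D \<ge> 2" using drop_ge2[OF D ne] by force
  ultimately show ?thesis by simp
qed

lemma Max_after_move:
  assumes D: "D \<subseteq> V" and ne: "tg_moves V N D \<noteq> {}"
  shows "Max ((\<lambda>v. Psi (D \<union> N v) div 2) ` tg_moves V N D) + 1 = (Psi D + 1) div 2"
proof -
  let ?f = "\<lambda>v. Psi (D \<union> N v) div 2"
  have "Max (?f ` tg_moves V N D) = (Psi D + 1) div 2 - 1"
  proof (rule Max_eqI)
    show "finite (?f ` tg_moves V N D)" using finite_V by simp
    show "y \<le> (Psi D + 1) div 2 - 1" if "y \<in> ?f ` tg_moves V N D" for y
      using that move_bounds[OF D] by fastforce
    show "(Psi D + 1) div 2 - 1 \<in> ?f ` tg_moves V N D"
    proof (cases "odd (Psi D)")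
      case True
      then obtain v where "v \<in> tg_moves V N D" "Psi D = Psi (D \<union> N v) + 1"
        using odd_drop1[OF D] by blast
      then show ?thesis using True by (intro image_eqI[of _ _ v]) presburger+
    next
      case False
      obtain v where "v \<in> tg_moves V N D" "Psi D \<le> Psi (D \<union> N v) + 2"
        using drop_le2[OF D ne] by blast
      moreover from this have "Psi (D \<union> N v) + 1 \<le> Psi D" using move_bounds[OF D] by blast
      ultimately show ?thesis using False by (intro image_eqI[of _ _ v]) presburger+
    qed
  qed
  moreover have "Psi D \<ge> 1" using ne move_bounds[OF D] by fastforce
  ultimately show ?thesis by simp
qed

lemma tg_val_eq:
  "D \<subseteq> V \<Longrightarrow> card (V - D) \<le> k \<Longrightarrow>
     tg_val V N D t k = (if t then Psi D div 2 else (Psi D + 1) div 2)"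
proof (induction k arbitrary: D t)
  case 0
  then have "V \<subseteq> D" using finite_V by auto
  then have "tg_moves V N D = {}" using nbr_subset by blast
  then show ?case using terminal 0 by simp
next
  case (Suc k)
  show ?case
  proof (cases "tg_moves V N D = {}")
    case True
    then show ?thesis using terminal Suc.prems by simp
  next
    case False
    have IH: "tg_val V N (D \<union> N v) t' k =
        (if t' then Psi (D \<union> N v) div 2 else (Psi (D \<union> N v) + 1) div 2)"
      if "v \<in> tg_moves V N D" for v t'
    proof (rule Suc.IH)
      show "D \<union> N v \<subseteq> V" using that nbr_subset Suc.prems by blast
      have "V - (D \<union> N v) \<subset> V - D" using that nbr_subset by blast
      then have "card (V - (D \<union> N v)) < card (V - D)"
        using finite_V by (simp add: psubset_card_mono)
      then show "card (V - (D \<union> N v)) \<le> k" using Suc.prems by simp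
    qed
    show ?thesis
    proof (cases t)
      case True
      have "(\<lambda>v. tg_val V N (D \<union> N v) False k) ` tg_moves V N D =
          (\<lambda>v. (Psi (D \<union> N v) + 1) div 2) ` tg_moves V N D"
        using IH by (intro image_cong) auto
      then show ?thesis using True False Min_after_move[OF Suc.prems(1) False]
        by (simp add: Let_def)
    next
      case t: False
      have "(\<lambda>v. tg_val V N (D \<union> N v) True k) ` tg_moves V N D =
          (\<lambda>v. Psi (D \<union> N v) div 2) ` tg_moves V N D"
        using IH by (intro image_cong) auto
      then show ?thesis using t False Max_after_move[OF Suc.prems(1) False]
        by (simp add: Let_def)
    qed
  qed
qed

end

text \<open>A boolean word is one parity class, True marking an entry not yet totally dominated.
  \<open>play k w\<close> dominates entries \<open>k - 1\<close> and \<open>k\<close> (just one of them when \<open>k = 0\<close>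
  or \<open>k = length w\<close>). \<open>word_pot a L w b\<close> is the potential of \<open>w\<close> preceded by \<open>L\<close>
  undominated entries, i.e. the sum of \<open>run_pot\<close> over its maximal runs; the flags of
  \<open>run_pot\<close> say whether an end of the run can be dominated without its neighbour in the run,
  which is the case next to a dominated entry and, via \<open>a\<close> and \<open>b\<close>, at the ends of the word.\<close>

definition run_pot :: "nat \<Rightarrow> bool \<Rightarrow> bool \<Rightarrow> nat" where
  "run_pot L a b = 2 * (L - (L + 1) div 3) + (if L mod 3 = 2 \<and> (a \<or> b) then 1 else 0)"

fun word_pot :: "bool \<Rightarrow> nat \<Rightarrow> bool list \<Rightarrow> bool \<Rightarrow> nat" where
  "word_pot a L [] b = run_pot L a b"
| "word_pot a L (x # w) b =
    (if x then word_pot a (Suc L) w b else run_pot L a True + word_pot True 0 w b)"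

fun play :: "nat \<Rightarrow> bool list \<Rightarrow> bool list" where
  "play _ [] = []"
| "play 0 (x # w) = False # w"
| "play (Suc 0) (x # w) = False # play 0 w"
| "play (Suc (Suc k)) (x # w) = x # play (Suc k) w"

lemma run_pot_0[simp]: "run_pot 0 a b = 0" by (simp add: run_pot_def)

lemma run_pot_add3: "run_pot (L + 3) a b = run_pot L a b + 4"
proof -
  have d: "(L + 3 + 1) div 3 = (L + 1) div 3 + 1"
    using div_add_self2[of 3 "L + 1"] by (simp add: add.commute add.left_commute)
  have "(L + 1) div 3 \<le> L" by linarith
  moreover have "(L + 3) mod 3 = L mod 3" by simp
  ultimately show ?thesis unfolding run_pot_def d by simp
qed

lemma run_pot_add_mult3: "run_pot (3 * k + r) a b = 4 * k + run_pot r a b"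
proof (induction k)
  case (Suc k)
  have e: "3 * Suc k + r = (3 * k + r) + 3" by simp
  show ?case unfolding e run_pot_add3 Suc.IH by simp
qed simp

lemma nat_mod3_induct [case_names small step]:
  fixes P :: "nat \<Rightarrow> bool"
  assumes small: "\<And>x. x < 3 \<Longrightarrow> P x" and step: "\<And>x. P x \<Longrightarrow> P (x + 3)"
  shows "P x"
proof (induction x rule: less_induct)
  case (less x)
  show ?case
  proof (cases "x < 3")
    case False
    then have "P (x - 3)" using less by simp
    then show ?thesis using step[of "x - 3"] False by simp
  qed (rule small)
qed

lemma less_3_cases: "(x::nat) < 3 \<Longrightarrow> x = 0 \<or> x = 1 \<or> x = 2" by arith

lemma run_pot_mult3: "run_pot (3 * k) a b = 4 * k"
  using run_pot_add_mult3[of k 0 a b] by simp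

lemma run_pot_mult3_plus1: "run_pot (3 * k + 1) a b = 4 * k + 2"
proof -
  have "(3 * k + 2) div 3 = k" "(3 * k + 1) mod 3 = 1" by presburger+
  then show ?thesis unfolding run_pot_def by simp
qed

lemma run_pot_mono_flag: "run_pot L a b \<le> run_pot L a True"
  unfolding run_pot_def by simp

lemma run_pot_commute: "run_pot L a b = run_pot L b a" unfolding run_pot_def by auto

lemma run_pot_left_open: "a \<Longrightarrow> run_pot L a b = run_pot L True b" unfolding run_pot_def by auto

lemma run_pot_split_bounds:
  "run_pot x a True + run_pot y True b + 1 \<le> run_pot (x + y + 2) a b \<and>
   run_pot (x + y + 2) a b \<le> run_pot x a True + run_pot y True b + 3"
proof (induction x rule: nat_mod3_induct)
  case (small x)
  show ?case
  proof (induction y rule: nat_mod3_induct)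
    case (small y)
    then show ?case using less_3_cases[OF \<open>x < 3\<close>] less_3_cases[OF \<open>y < 3\<close>]
      by (elim disjE) (simp_all add: run_pot_def)
  next
    case (step y)
    have "run_pot (x + (y + 3) + 2) a b = run_pot (x + y + 2) a b + 4"
      using run_pot_add3[of "x + y + 2"] by (simp add: add_ac)
    moreover have "run_pot (y + 3) True b = run_pot y True b + 4" by (rule run_pot_add3)
    ultimately show ?case using step by linarith
  qed
next
  case (step x)
  have "run_pot (x + 3 + y + 2) a b = run_pot (x + y + 2) a b + 4"
    using run_pot_add3[of "x + y + 2"] by (simp add: add_ac)
  moreover have "run_pot (x + 3) a True = run_pot x a True + 4" by (rule run_pot_add3)
  ultimately show ?case using step by linarith
qed

lemma run_pot_Suc_bounds:
  "run_pot x True b + 1 \<le> run_pot (x + 1) True b \<and> run_pot (x + 1) True b \<le> run_pot x True b + 3"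
proof (induction x rule: nat_mod3_induct)
  case (small x)
  then show ?case using less_3_cases[OF small] by (elim disjE) (simp_all add: run_pot_def)
next
  case (step x)
  have "run_pot (x + 3 + 1) True b = run_pot (x + 1) True b + 4"
    using run_pot_add3[of "x + 1"] by (simp add: add_ac)
  then show ?case using step run_pot_add3[of x True b] by linarith
qed

lemma run_pot_add2_ge: "run_pot L True b + 2 \<le> run_pot (L + 2) a b"
proof (induction L rule: nat_mod3_induct)
  case (small L)
  then show ?case using less_3_cases[OF small] by (elim disjE) (simp_all add: run_pot_def)
next
  case (step L)
  have "run_pot (L + 3 + 2) a b = run_pot (L + 2) a b + 4"
    using run_pot_add3[of "L + 2"] by (simp add: add_ac)
  then show ?case using step run_pot_add3[of L True b] by linarith
qed

lemma word_pot_append_False: "word_pot a L (xs @ False # ys) b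
    = word_pot a L xs True + word_pot True 0 ys b"
  by (induction xs arbitrary: a L) auto

lemma word_pot_replicate_True: "word_pot a L (replicate q True @ ys) b = word_pot a (L + q) ys b"
  by (induction q arbitrary: L) auto

lemma word_pot_split_prefix: "xs = [] \<or> last xs = False \<Longrightarrow>
   word_pot a 0 (xs @ zs) b =
     (if xs = [] then 0 else word_pot a 0 (butlast xs) True) + word_pot (xs \<noteq> [] \<or> a) 0 zs b"
proof (cases "xs = []")
  case False
  assume "xs = [] \<or> last xs = False"
  with False obtain xs0 where e: "xs = xs0 @ [False]" by (metis append_butlast_last_id)
  then show ?thesis by (simp add: word_pot_append_False)
qed simp

lemma word_pot_all_True: "word_pot a L (replicate q True) b = run_pot (L + q) a b"
  using word_pot_replicate_True[of a L q "[]" b] by simp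

lemma word_pot_split_suffix: "ys = [] \<or> hd ys = False \<Longrightarrow>
   word_pot c L ys b =
     run_pot L c (ys \<noteq> [] \<or> b) + (if ys = [] then 0 else word_pot True 0 (tl ys) b)"
  by (cases ys) auto

lemma length_play[simp]: "length (play k w) = length w"
  by (induction k w rule: play.induct) auto

lemma nth_play: "i < length w \<Longrightarrow> play k w ! i = (w ! i \<and> i + 1 \<noteq> k \<and> i \<noteq> k)"
proof (induction k w arbitrary: i rule: play.induct)
  case (2 x w) then show ?case by (cases i) auto
next
  case (3 x w) then show ?case by (cases i) (auto simp: nth_Cons' length_play)
next
  case (4 k x w) then show ?case by (cases i) auto
qed simp

lemma play_append: "1 \<le> k \<Longrightarrow> play (length xs + k) (xs @ ys) = xs @ play k ys"
proof (induction xs)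
  case (Cons x xs)
  then obtain m where "length xs + k = Suc m" by (cases "length xs + k") auto
  then show ?case using Cons by simp
qed simp

lemma play_replicate_True: "play (Suc L) (replicate (Suc L) True @ ys)
    = replicate L True @ False # play 0 ys"
proof (induction L)
  case (Suc L) then show ?case by simp
qed simp

lemma play_0_False_head: "ys = [] \<or> hd ys = False \<Longrightarrow> play 0 ys = ys"
  by (cases ys) auto

definition run_played :: "nat \<Rightarrow> nat \<Rightarrow> bool list" where
  "run_played M j = (if M = 0 then [] else if j = 0 then False # replicate (M - 1) True
     else if j = M then replicate (M - 1) True @ [False]
     else replicate (j - 1) True @ False # False # replicate (M - j - 1) True)"

lemma play_after_prefix: "xs = [] \<or> last xs = False \<Longrightarrow> play (length xs) (xs @ zs) = xs @ play 0 zs"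
proof (cases "xs = []")
  case False
  assume "xs = [] \<or> last xs = False"
  with False obtain xs0 where e: "xs = xs0 @ [False]" by (metis append_butlast_last_id)
  have "play (length xs0 + 1) (xs0 @ (False # zs)) = xs0 @ play 1 (False # zs)"
    by (rule play_append) simp
  then show ?thesis using e by simp
qed simp

lemma play_in_run_word:
  assumes xs: "xs = [] \<or> last xs = False" and ys: "ys = [] \<or> hd ys = False" and j: "j \<le> M"
  shows "play (length xs + j) (xs @ replicate M True @ ys) = xs @ run_played M j @ ys"
proof (cases "j = 0")
  case True
  then show ?thesis using play_after_prefix[OF xs] play_0_False_head[OF ys]
    by (cases M) (auto simp: run_played_def)
next
  case False
  then obtain i where i: "j = Suc i" by (cases j) auto
  have rep: "replicate M True @ ys = replicate (Suc i) True @ (replicate (M - j) True @ ys)"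
  proof -
    have "replicate M True = replicate (Suc i) True @ replicate (M - j) True"
      using j i by (metis le_add_diff_inverse replicate_add)
    then show ?thesis by simp
  qed
  have "play (length xs + j) (xs @ replicate M True @ ys) = xs @ play j (replicate M True @ ys)"
    using False by (intro play_append) simp
  also have "\<dots> = xs @ replicate i True @ False # play 0 (replicate (M - j) True @ ys)"
    unfolding rep i using play_replicate_True by simp
  also have "\<dots> = xs @ run_played M j @ ys"
  proof (cases "M - j")
    case 0
    then have "M = j" using j by simp
    then show ?thesis using 0 i play_0_False_head[OF ys] by (simp add: run_played_def)
  next
    case (Suc r)
    then show ?thesis using i j by (simp add: run_played_def)
  qed
  finally show ?thesis .
qed

definition run_pot_played :: "nat \<Rightarrow> nat \<Rightarrow> bool \<Rightarrow> bool \<Rightarrow> nat" where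
  "run_pot_played M j a b = (if M = 0 then 0 else if j = 0 then run_pot (M - 1) True b
     else if j = M then run_pot (M - 1) a True
     else run_pot (j - 1) a True + run_pot (M - j - 1) True b)"

lemma word_pot_run_decomp:
  fixes a b :: bool and xs ys :: "bool list" and j M :: nat
  assumes xs: "xs = [] \<or> last xs = False" and ys: "ys = [] \<or> hd ys = False" and j: "j \<le> M"
  defines "P \<equiv> (if xs = [] then 0 else word_pot a 0 (butlast xs) True)"
    and "Q \<equiv> (if ys = [] then 0 else word_pot True 0 (tl ys) b)"
    and "a' \<equiv> (xs \<noteq> [] \<or> a)" and "b' \<equiv> (ys \<noteq> [] \<or> b)"
  shows "word_pot a 0 (xs @ replicate M True @ ys) b = P + run_pot M a' b' + Q"
    and "word_pot a 0 (xs @ run_played M j @ ys) b = P + run_pot_played M j a' b' + Q"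
proof -
  have Y: "word_pot c L ys b = run_pot L c b' + Q" for c L using word_pot_split_suffix[OF ys]
    unfolding Q_def b'_def by simp
  have Y0: "word_pot True 0 ys b = Q" using Y[of True 0] by simp
  show "word_pot a 0 (xs @ replicate M True @ ys) b = P + run_pot M a' b' + Q"
    using word_pot_split_prefix[OF xs] unfolding P_def a'_def
      by (simp add: word_pot_replicate_True Y)
  have "word_pot a' 0 (run_played M j @ ys) b = run_pot_played M j a' b' + Q"
  proof -
    consider "M = 0" | "M \<noteq> 0" "j = 0" | "M \<noteq> 0" "j \<noteq> 0" "j = M" | "M \<noteq> 0" "j \<noteq> 0" "j \<noteq> M" by blast
    then show ?thesis
    proof cases
      case 1 then show ?thesis by (simp add: run_played_def run_pot_played_def Y)
    next
      case 2 then show ?thesis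
        by (simp add: run_played_def run_pot_played_def word_pot_replicate_True Y)
    next
      case 3 then show ?thesis
        by (simp add: run_played_def run_pot_played_def word_pot_replicate_True word_pot_all_True
            word_pot_append_False Y0)
    next
      case 4
      then have "run_played M j @ ys =
          replicate (j - 1) True @ False # False # replicate (M - j - 1) True @ ys"
        by (simp add: run_played_def)
      then show ?thesis using 4 by (simp add: run_pot_played_def word_pot_replicate_True Y)
    qed
  qed
  then show "word_pot a 0 (xs @ run_played M j @ ys) b = P + run_pot_played M j a' b' + Q"
    using word_pot_split_prefix[OF xs] unfolding P_def a'_def by simp
qed

lemma run_pot_played_bounds:
  assumes "1 \<le> M" "j \<le> M" "j = 0 \<longrightarrow> a" "j = M \<longrightarrow> b"
  shows "run_pot_played M j a b + 1 \<le> run_pot M a b \<and> run_pot M a b \<le> run_pot_played M j a b + 3"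
proof -
  consider "j = 0" | "j \<noteq> 0" "j = M" | "j \<noteq> 0" "j \<noteq> M" by blast
  then show ?thesis
  proof cases
    case 1
    then have M: "M = (M - 1) + 1" and a using assms by auto
    have "run_pot_played M j a b = run_pot (M - 1) True b" using 1 assms
      unfolding run_pot_played_def by simp
    moreover have "run_pot M a b = run_pot ((M - 1) + 1) True b" using M run_pot_left_open[OF \<open>a\<close>]
      by simp
    ultimately show ?thesis using run_pot_Suc_bounds[of "M - 1" b] by simp
  next
    case 2
    then have M: "M = (M - 1) + 1" and b using assms by auto
    have "run_pot_played M j a b = run_pot (M - 1) True a" using 2 assms run_pot_commute
      unfolding run_pot_played_def by simp
    moreover have "run_pot M a b = run_pot ((M - 1) + 1) True a"
      using M run_pot_left_open[OF \<open>b\<close>] run_pot_commute by metis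
    ultimately show ?thesis using run_pot_Suc_bounds[of "M - 1" a] by simp
  next
    case 3
    define x where "x = j - 1"
    define y where "y = M - j - 1"
    have M: "M = x + y + 2" using assms 3 unfolding x_def y_def by simp
    have "run_pot_played M j a b = run_pot x a True + run_pot y True b" using 3 assms
      unfolding run_pot_played_def x_def y_def by simp
    moreover have "run_pot M a b = run_pot (x + y + 2) a b" using M by simp
    ultimately show ?thesis using run_pot_split_bounds[of x a y b] by simp
  qed
qed

lemma run_play_drop_ge2:
  assumes "1 \<le> M" "2 \<le> M \<or> a \<or> b"
  shows "\<exists>j\<le>M. (j = 0 \<longrightarrow> a) \<and> (j = M \<longrightarrow> b) \<and> run_pot_played M j a b + 2 \<le> run_pot M a b"
proof (cases "M = 1")
  case True
  then show ?thesis using assms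
    by (intro exI[of _ "if a then 0 else 1"]) (auto simp: run_pot_played_def run_pot_def)
next
  case False
  then have "run_pot_played M 1 a b = run_pot (M - 2) True b" and M: "M = (M - 2) + 2"
    using assms by (simp_all add: run_pot_played_def numeral_2_eq_2)
  then show ?thesis using False run_pot_add2_ge[of "M - 2" b a] by (intro exI[of _ 1]) auto
qed

lemma run_play_drop_le2:
  assumes "1 \<le> M" "2 \<le> M \<or> a \<or> b"
  shows "\<exists>j\<le>M. (j = 0 \<longrightarrow> a) \<and> (j = M \<longrightarrow> b) \<and> run_pot M a b \<le> run_pot_played M j a b + 2"
proof (cases "M \<le> 2")
  case True
  then have "M = 1 \<or> M = 2" using assms by linarith
  then show ?thesis using assms
    by (intro exI[of _ "if a then 0 else if b then M else 1"])
      (auto simp: run_pot_played_def run_pot_def)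
next
  case False
  define x where "x = (M - 3) mod 3"
  define k where "k = (M - 3) div 3"
  have M: "M = 3 * k + (x + 3)" using False unfolding x_def k_def by simp
  have "run_pot_played M (x + 1) a b = run_pot x a True + run_pot (3 * k + 1) True b"
    using M by (simp add: run_pot_played_def)
  moreover have "run_pot M a b = 4 * k + run_pot x a b + 4"
    using M by (simp add: run_pot_add_mult3 run_pot_add3)
  ultimately show ?thesis using M run_pot_mult3_plus1[of k True b] run_pot_mono_flag[of x a b]
    by (intro exI[of _ "x + 1"]) auto
qed

lemma run_play_drop_3:
  assumes "M mod 3 = 2" "a \<or> b"
  shows "\<exists>j\<le>M. (j = 0 \<longrightarrow> a) \<and> (j = M \<longrightarrow> b) \<and> run_pot M a b = run_pot_played M j a b + 3"
proof -
  define k where "k = M div 3"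
  have M: "M = 3 * k + 2" using assms(1) div_mult_mod_eq[of M 3] unfolding k_def by linarith
  have "run_pot_played M 1 a b = run_pot (3 * k) True b" using M by (simp add: run_pot_played_def)
  then show ?thesis using M assms run_pot_add_mult3[of k 0 True b] run_pot_add_mult3[of k 2 a b]
    by (intro exI[of _ 1]) (simp add: run_pot_def)
qed

lemma run_play_drop_1:
  assumes "M mod 3 = 2" "a \<or> b"
  shows "\<exists>j\<le>M. (j = 0 \<longrightarrow> a) \<and> (j = M \<longrightarrow> b) \<and> run_pot M a b = run_pot_played M j a b + 1"
proof -
  define k where "k = M div 3"
  have M: "M = 3 * k + 2" using assms(1) div_mult_mod_eq[of M 3] unfolding k_def by linarith
  show ?thesis
  proof (cases a)
    case True
    have "run_pot_played M 0 a b = run_pot (3 * k + 1) True b" using M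
      by (simp add: run_pot_played_def)
    then show ?thesis using M True run_pot_add_mult3[of k 1 True b] run_pot_add_mult3[of k 2 a b]
      by (intro exI[of _ 0]) (simp add: run_pot_def)
  next
    case False
    then have b using assms by simp
    have "run_pot_played M M a b = run_pot (3 * k + 1) a True" using M
      by (simp add: run_pot_played_def)
    then show ?thesis
      using M False \<open>b\<close> run_pot_add_mult3[of k 1 a True] run_pot_add_mult3[of k 2 a b]
      by (intro exI[of _ M]) (simp add: run_pot_def)
  qed
qed

definition legal_play :: "bool \<Rightarrow> bool \<Rightarrow> bool list \<Rightarrow> nat \<Rightarrow> bool" where
  "legal_play a b w k \<longleftrightarrow> k \<le> length w \<and> (k = 0 \<longrightarrow> a) \<and> (k = length w \<longrightarrow> b) \<and> play k w \<noteq> w"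

lemma word_run_around:
  assumes "k \<le> length w"
  shows "\<exists>xs M j ys. w = xs @ replicate M True @ ys \<and> k = length xs + j \<and> j \<le> M \<and>
    (xs = [] \<or> last xs = False) \<and> (ys = [] \<or> hd ys = False)"
proof -
  define u where "u = take k w"
  define v where "v = drop k w"
  define A where "A = takeWhile id (rev u)"
  define xs where "xs = rev (dropWhile id (rev u))"
  define B where "B = takeWhile id v"
  define ys where "ys = dropWhile id v"
  have "rev u = A @ dropWhile id (rev u)" unfolding A_def by simp
  then have u: "u = xs @ rev A" unfolding xs_def by (metis rev_append rev_rev_ident)
  have "\<forall>x\<in>set A. x = True" unfolding A_def by (auto dest: set_takeWhileD)
  then have "replicate (length A) True = A" by (rule replicate_length_same)
  then obtain nA where rA: "rev A = replicate nA True" by (metis rev_replicate)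
  have v: "v = B @ ys" unfolding B_def ys_def by simp
  have "\<forall>x\<in>set B. x = True" unfolding B_def by (auto dest: set_takeWhileD)
  then have "replicate (length B) True = B" by (rule replicate_length_same)
  then obtain nB where rB: "B = replicate nB True" by metis
  have "w = u @ v" unfolding u_def v_def by simp
  also have "\<dots> = xs @ replicate nA True @ replicate nB True @ ys" using u v rA rB by simp
  also have "\<dots> = xs @ replicate (nA + nB) True @ ys" by (simp add: replicate_add)
  finally have w: "w = xs @ replicate (nA + nB) True @ ys" .
  have "length u = k" using assms unfolding u_def by simp
  then have k: "k = length xs + nA" using u rA by (metis length_append length_rev length_replicate)
  have xs: "xs = [] \<or> last xs = False"
    unfolding xs_def using hd_dropWhile[of id "rev u"] by (auto simp: last_rev)
  have ys: "ys = [] \<or> hd ys = False"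
    unfolding ys_def using hd_dropWhile[of id v] by auto
  show ?thesis using w k xs ys by (intro exI[of _ xs] exI[of _ "nA + nB"]
      exI[of _ nA] exI[of _ ys]) simp
qed

lemma play_in_run:
  assumes w: "w = xs @ replicate M True @ ys" and xs: "xs = [] \<or> last xs = False"
    and ys: "ys = [] \<or> hd ys = False" and M: "1 \<le> M" and j: "j \<le> M"
    and ja: "j = 0 \<longrightarrow> (xs \<noteq> [] \<or> a)" and jb: "j = M \<longrightarrow> (ys \<noteq> [] \<or> b)"
  shows "legal_play a b w (length xs + j) \<and>
     word_pot a 0 w b + run_pot_played M j (xs \<noteq> [] \<or> a) (ys \<noteq> [] \<or> b) =
       word_pot a 0 (play (length xs + j) w) b + run_pot M (xs \<noteq> [] \<or> a) (ys \<noteq> [] \<or> b)"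
proof -
  define a' b' where "a' = (xs \<noteq> [] \<or> a)" and "b' = (ys \<noteq> [] \<or> b)"
  define P where "P = (if xs = [] then 0 else word_pot a 0 (butlast xs) True)"
  define Q where "Q = (if ys = [] then 0 else word_pot True 0 (tl ys) b)"
  have e1: "word_pot a 0 w b = P + run_pot M a' b' + Q"
    using word_pot_run_decomp(1)[OF xs ys j] w unfolding P_def Q_def a'_def b'_def by simp
  have e2: "word_pot a 0 (play (length xs + j) w) b = P + run_pot_played M j a' b' + Q"
    using word_pot_run_decomp(2)[OF xs ys j] play_in_run_word[OF xs ys j] w
    unfolding P_def Q_def a'_def b'_def by simp
  have "run_pot_played M j a' b' + 1 \<le> run_pot M a' b'"
    using run_pot_played_bounds[OF M j ja jb] unfolding a'_def b'_def by simp
  then have "play (length xs + j) w \<noteq> w" using e1 e2 by auto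
  moreover have "length xs + j \<le> length w" using w j by simp
  moreover have "length xs + j = 0 \<longrightarrow> a" using ja by simp
  moreover have "length xs + j = length w \<longrightarrow> b" using jb w j by auto
  ultimately show ?thesis unfolding legal_play_def using e1 e2 a'_def b'_def by simp
qed

lemma word_pot_play_bounds:
  assumes "legal_play a b w k"
  shows "word_pot a 0 (play k w) b + 1 \<le> word_pot a 0 w b \<and> word_pot a 0 w b
      \<le> word_pot a 0 (play k w) b + 3"
proof -
  from assms have kl: "k \<le> length w" unfolding legal_play_def by simp
  obtain xs M j ys where w: "w = xs @ replicate M True @ ys" and k: "k = length xs + j"
    and j: "j \<le> M"
    and xs: "xs = [] \<or> last xs = False" and ys: "ys = [] \<or> hd ys = False"
    using word_run_around[OF kl] by blast
  have M: "1 \<le> M"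
  proof (rule ccontr)
    assume "\<not> 1 \<le> M"
    then have "M = 0" by simp
    then have "play k w = w" using play_in_run_word[OF xs ys j] w k by (simp add: run_played_def)
    then show False using assms unfolding legal_play_def by simp
  qed
  have ja: "j = 0 \<longrightarrow> (xs \<noteq> [] \<or> a)" using assms k unfolding legal_play_def by auto
  have jb: "j = M \<longrightarrow> (ys \<noteq> [] \<or> b)" using assms k w unfolding legal_play_def by auto
  show ?thesis using play_in_run[OF w xs ys M j ja jb] run_pot_played_bounds[OF M j ja jb]
    unfolding k by linarith
qed

lemma word_True_run:
  assumes "i < length w" "w ! i"
  shows "\<exists>xs M ys. w = xs @ replicate M True @ ys \<and> (xs = [] \<or> last xs = False) \<and>
     (ys = [] \<or> hd ys = False) \<and> 1 \<le> M"
proof -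
  obtain xs M j ys where w: "w = xs @ replicate M True @ ys" and k: "i = length xs + j"
    and j: "j \<le> M"
    and xs: "xs = [] \<or> last xs = False" and ys: "ys = [] \<or> hd ys = False"
    using word_run_around[of i w] assms by auto
  have "j \<noteq> M"
  proof
    assume "j = M"
    then have "w ! i = ys ! 0" using w k by (simp add: nth_append)
    moreover have "ys \<noteq> []" using assms w k \<open>j = M\<close> by auto
    ultimately show False using ys assms by (simp add: hd_conv_nth)
  qed
  then show ?thesis using w xs ys j by (intro exI[of _ xs] exI[of _ M] exI[of _ ys]) auto
qed

lemma odd_word_pot_run:
  "odd (word_pot a L w b) \<Longrightarrow> \<exists>xs M ys. replicate L True @ w = xs @ replicate M True @ ys \<and>
     (xs = [] \<or> last xs = False) \<and> (ys = [] \<or> hd ys = False) \<and> M mod 3 = 2 \<and>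
     (xs \<noteq> [] \<or> a \<or> ys \<noteq> [] \<or> b)"
proof (induction w arbitrary: a L)
  case Nil
  then have "L mod 3 = 2 \<and> (a \<or> b)" by (auto simp: run_pot_def split: if_splits)
  then show ?case by (intro exI[of _ "[]"] exI[of _ L]) auto
next
  case (Cons x w)
  show ?case
  proof (cases x)
    case True
    then have "odd (word_pot a (Suc L) w b)" using Cons.prems by simp
    from Cons.IH[OF this] True show ?thesis by (simp add: replicate_app_Cons_same)
  next
    case False
    show ?thesis
    proof (cases "odd (run_pot L a True)")
      case True
      then have "L mod 3 = 2" by (auto simp: run_pot_def split: if_splits)
      then show ?thesis using False
        by (intro exI[of _ "[]"] exI[of _ L] exI[of _ "False # w"]) auto
    next
      case ev: False
      then have "odd (word_pot True 0 w b)" using Cons.prems False by simp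
      from Cons.IH[OF this] obtain xs M ys where
        h: "w = xs @ replicate M True @ ys" "xs = [] \<or> last xs = False"
          "ys = [] \<or> hd ys = False" "M mod 3 = 2"
        by auto
      show ?thesis using h False
        by (intro exI[of _ "replicate L True @ False # xs"] exI[of _ M] exI[of _ ys]) auto
    qed
  qed
qed

lemma word_play_drop_ge2:
  assumes "i < length w" "w ! i" "2 \<le> length w \<or> a \<or> b"
  shows "\<exists>k. legal_play a b w k \<and> word_pot a 0 (play k w) b + 2 \<le> word_pot a 0 w b"
proof -
  obtain xs M ys where w: "w = xs @ replicate M True @ ys" and xs: "xs = [] \<or> last xs = False"
    and ys: "ys = [] \<or> hd ys = False" and M: "1 \<le> M" using word_True_run[OF assms(1,2)] by blast
  have "2 \<le> M \<or> (xs \<noteq> [] \<or> a) \<or> (ys \<noteq> [] \<or> b)" using assms(3) w M by auto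
  from run_play_drop_ge2[OF M this] obtain j where
    j: "j \<le> M" "j = 0 \<longrightarrow> (xs \<noteq> [] \<or> a)" "j = M \<longrightarrow> (ys \<noteq> [] \<or> b)"
    "run_pot_played M j (xs \<noteq> [] \<or> a) (ys \<noteq> [] \<or> b) + 2 \<le> run_pot M (xs \<noteq> [] \<or> a) (ys \<noteq> [] \<or> b)"
    by blast
  show ?thesis using play_in_run[OF w xs ys M j(1-3)] j(4)
    by (intro exI[of _ "length xs + j"]) linarith
qed

lemma word_play_drop_le2:
  assumes "i < length w" "w ! i" "2 \<le> length w \<or> a \<or> b"
  shows "\<exists>k. legal_play a b w k \<and> word_pot a 0 w b \<le> word_pot a 0 (play k w) b + 2"
proof -
  obtain xs M ys where w: "w = xs @ replicate M True @ ys" and xs: "xs = [] \<or> last xs = False"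
    and ys: "ys = [] \<or> hd ys = False" and M: "1 \<le> M" using word_True_run[OF assms(1,2)] by blast
  have "2 \<le> M \<or> (xs \<noteq> [] \<or> a) \<or> (ys \<noteq> [] \<or> b)" using assms(3) w M by auto
  from run_play_drop_le2[OF M this] obtain j where
    j: "j \<le> M" "j = 0 \<longrightarrow> (xs \<noteq> [] \<or> a)" "j = M \<longrightarrow> (ys \<noteq> [] \<or> b)"
    "run_pot M (xs \<noteq> [] \<or> a) (ys \<noteq> [] \<or> b) \<le> run_pot_played M j (xs \<noteq> [] \<or> a) (ys \<noteq> [] \<or> b) + 2"
    by blast
  show ?thesis using play_in_run[OF w xs ys M j(1-3)] j(4)
    by (intro exI[of _ "length xs + j"]) linarith
qed

lemma odd_word_play_drop_1_3:
  assumes "odd (word_pot a 0 w b)"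
  shows "(\<exists>k. legal_play a b w k \<and> word_pot a 0 w b = word_pot a 0 (play k w) b + 3) \<and>
         (\<exists>k. legal_play a b w k \<and> word_pot a 0 w b = word_pot a 0 (play k w) b + 1)"
proof -
  obtain xs M ys where w: "w = xs @ replicate M True @ ys" and xs: "xs = [] \<or> last xs = False"
    and ys: "ys = [] \<or> hd ys = False" and Mm: "M mod 3 = 2" and f: "xs \<noteq> [] \<or> a \<or> ys \<noteq> [] \<or> b"
    using odd_word_pot_run[OF assms] by auto
  have M: "1 \<le> M" using Mm by (cases M) auto
  have f': "(xs \<noteq> [] \<or> a) \<or> (ys \<noteq> [] \<or> b)" using f by blast
  obtain j where j: "j \<le> M" "j = 0 \<longrightarrow> (xs \<noteq> [] \<or> a)" "j = M \<longrightarrow> (ys \<noteq> [] \<or> b)"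
    "run_pot M (xs \<noteq> [] \<or> a) (ys \<noteq> [] \<or> b) = run_pot_played M j (xs \<noteq> [] \<or> a) (ys \<noteq> [] \<or> b) + 3"
    using run_play_drop_3[OF Mm f'] by blast
  obtain j' where j': "j' \<le> M" "j' = 0 \<longrightarrow> (xs \<noteq> [] \<or> a)" "j' = M \<longrightarrow> (ys \<noteq> [] \<or> b)"
    "run_pot M (xs \<noteq> [] \<or> a) (ys \<noteq> [] \<or> b) = run_pot_played M j' (xs \<noteq> [] \<or> a) (ys \<noteq> [] \<or> b) + 1"
    using run_play_drop_1[OF Mm f'] by blast
  show ?thesis
    using play_in_run[OF w xs ys M j(1-3)] j(4) play_in_run[OF w xs ys M j'(1-3)] j'(4)
    by (intro conjI exI[of _ "length xs + j"] exI[of _ "length xs + j'"]) linarith+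
qed

text \<open>Vertex \<open>v\<close>
  dominates the entries \<open>(v + 1) div 2 - 1\<close> and \<open>(v + 1) div 2\<close> of class \<open>(v + 1) mod 2\<close>;
  the first entry of class 1 is dominated alone by vertex 0, and the last entry of a class
  alone by vertex \<open>n - 1\<close> if that vertex lies in the other class.\<close>

definition class_size :: "nat \<Rightarrow> nat \<Rightarrow> nat" where
  "class_size n p = (n + 1 - p) div 2"

definition class_word :: "nat \<Rightarrow> nat \<Rightarrow> nat set \<Rightarrow> bool list" where
  "class_word n p D = map (\<lambda>j. 2 * j + p \<notin> D) [0..<class_size n p]"

definition left_open :: "nat \<Rightarrow> bool" where
  "left_open p = (1 \<le> p)"

definition right_open :: "nat \<Rightarrow> nat \<Rightarrow> bool" where
  "right_open n p = (2 * class_size n p + p \<le> n)"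

abbreviation class_word_pot :: "nat \<Rightarrow> nat \<Rightarrow> bool list \<Rightarrow> nat" where
  "class_word_pot n p w \<equiv> word_pot (left_open p) 0 w (right_open n p)"

definition class_pot :: "nat \<Rightarrow> nat \<Rightarrow> nat set \<Rightarrow> nat" where
  "class_pot n p D = class_word_pot n p (class_word n p D)"

definition path_pot :: "nat \<Rightarrow> nat set \<Rightarrow> nat" where
  "path_pot n D = class_pot n 0 D + class_pot n 1 D"

lemma path_pot_split: "q \<le> 1 \<Longrightarrow> path_pot n D = class_pot n q D + class_pot n (1 - q) D"
  unfolding path_pot_def by (cases q) auto

lemma length_class_word[simp]: "length (class_word n p D) = class_size n p"
  unfolding class_word_def by simp

lemma nth_class_word: "i < class_size n p \<Longrightarrow> class_word n p D ! i = (2 * i + p \<notin> D)"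
  unfolding class_word_def by simp

lemma path_nbr_iff: "x \<in> path_nbr n v \<longleftrightarrow> x < n \<and> v < n \<and> (x + 1 = v \<or> v + 1 = x)"
  unfolding path_nbr_def by simp

lemma class_size_bound: "2 * class_size n p \<le> n + 1 - p"
  unfolding class_size_def using div_mult_mod_eq[of "n + 1 - p" 2] by linarith

lemma class_size_less: "i < class_size n p \<Longrightarrow> p \<le> 1 \<Longrightarrow> 2 * i + p < n"
  using class_size_bound[of n p] by linarith

lemma less_class_size: "2 * i + p < n \<Longrightarrow> p \<le> 1 \<Longrightarrow> i < class_size n p"
proof -
  assume "2 * i + p < n" "p \<le> 1"
  then have "2 * i + 2 \<le> n + 1 - p" by linarith
  then have "(2 * i + 2) div 2 \<le> (n + 1 - p) div 2" by (rule div_le_mono)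
  then show ?thesis unfolding class_size_def by simp
qed

lemma path_edge_class_index:
  assumes "v + 1 = 2 * s + (r::nat)" "r \<le> 1" "p \<le> 1"
  shows "(2 * i + p + 1 = v \<or> v + 1 = 2 * i + p) \<longleftrightarrow> (r = p \<and> (i + 1 = s \<or> i = s))"
proof -
  have ne: "2 * a \<noteq> 2 * b + 1" for a b :: nat using double_not_eq_Suc_double[of a b] by simp
  consider "r = 0" "p = 0" | "r = 0" "p = 1" | "r = 1" "p = 0" | "r = 1" "p = 1" using assms(2,3)
    by linarith
  then show ?thesis
  proof cases
    case 1 then show ?thesis using assms(1) by auto
  next
    case 2
    have "2 * (i + 2) \<noteq> 2 * s + 1" "2 * s \<noteq> 2 * i + 1" using ne by blast+
    then show ?thesis using 2 assms(1) by auto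
  next
    case 3
    have "2 * (i + 1) \<noteq> 2 * s + 1" "2 * i \<noteq> 2 * s + 1" using ne by blast+
    then show ?thesis using 3 assms(1) by auto
  next
    case 4 then show ?thesis using assms(1) by auto
  qed
qed

lemma class_word_dominate:
  assumes "v < n" "p \<le> 1"
  shows "class_word n p (D \<union> path_nbr n v) =
     (if (v + 1) mod 2 = p then play ((v + 1) div 2) (class_word n p D) else class_word n p D)"
proof (rule nth_equalityI)
  show "length (class_word n p (D \<union> path_nbr n v)) =
    length (if (v + 1) mod 2 = p then play ((v + 1) div 2) (class_word n p D) else class_word n p D)"
    by simp
  fix i assume "i < length (class_word n p (D \<union> path_nbr n v))"
  then have i: "i < class_size n p" by simp
  have lt: "2 * i + p < n" using class_size_less[OF i assms(2)] .
  have "class_word n p (D \<union> path_nbr n v) ! i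
      = (2 * i + p \<notin> D \<and> \<not> (2 * i + p + 1 = v \<or> v + 1 = 2 * i + p))"
    using nth_class_word[OF i] lt assms by (simp add: path_nbr_iff)
  moreover have "(2 * i + p + 1 = v \<or> v + 1 = 2 * i + p) \<longleftrightarrow>
      ((v + 1) mod 2 = p \<and> (i + 1 = (v + 1) div 2 \<or> i = (v + 1) div 2))"
    using path_edge_class_index[of v "(v + 1) div 2" "(v + 1) mod 2" p i] assms(2) by simp
  ultimately show "class_word n p (D \<union> path_nbr n v) ! i =
    (if (v + 1) mod 2 = p then play ((v + 1) div 2) (class_word n p D) else class_word n p D) ! i"
    using i by (auto simp: nth_play nth_class_word)
qed

lemma legal_play_of_move:
  assumes "v < n" "path_nbr n v - D \<noteq> {}"
  shows "legal_play (left_open ((v + 1) mod 2)) (right_open n ((v + 1) mod 2))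
    (class_word n ((v + 1) mod 2) D) ((v + 1) div 2)"
proof -
  define q where "q = (v + 1) mod 2"
  define k where "k = (v + 1) div 2"
  have q1: "q \<le> 1" unfolding q_def by simp
  obtain x where x: "x \<in> path_nbr n v" "x \<notin> D" using assms by blast
  then have xn: "x < n" and xv: "x + 1 = v \<or> v + 1 = x" by (auto simp: path_nbr_iff)
  define i where "i = x div 2"
  have "x mod 2 = (v + 1) mod 2"
  proof (cases "x + 1 = v")
    case True then have "v + 1 = x + 2" by simp
    then show ?thesis by simp
  next
    case False then show ?thesis using xv by simp
  qed
  then have xi: "x = 2 * i + q" unfolding i_def q_def by (metis div_mult_mod_eq mult.commute)
  have i: "i < class_size n q" using less_class_size[of i q n] xi xn q1 by simp
  have "class_word n q (D \<union> path_nbr n v) ! i = False" using nth_class_word[OF i] xi x by simp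
  moreover have "class_word n q D ! i = True" using nth_class_word[OF i] xi x by simp
  ultimately have "play k (class_word n q D) \<noteq> class_word n q D"
    using class_word_dominate[OF assms(1) q1, of D] unfolding q_def k_def by auto
  moreover have kq: "2 * k + q = v + 1" unfolding k_def q_def by simp
  moreover have "k \<le> class_size n q"
  proof -
    have "2 * k \<le> n + 1 - q" using kq assms(1) by linarith
    then have "(2 * k) div 2 \<le> (n + 1 - q) div 2" by (rule div_le_mono)
    then show ?thesis unfolding class_size_def by simp
  qed
  moreover have "k = 0 \<longrightarrow> left_open q" using kq unfolding left_open_def by auto
  moreover have "k = class_size n q \<longrightarrow> right_open n q" using kq assms(1) unfolding right_open_def
    by auto
  ultimately show ?thesis unfolding legal_play_def q_def[symmetric] k_def[symmetric] by simp
qed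

lemma move_of_legal_play:
  assumes "p \<le> 1" "legal_play (left_open p) (right_open n p) (class_word n p D) k"
  shows "2 * k + p - 1 < n \<and> (2 * k + p - 1 + 1) mod 2 = p \<and> (2 * k + p - 1 + 1) div 2 = k \<and>
    path_nbr n (2 * k + p - 1) - D \<noteq> {}"
proof -
  have k: "k \<le> class_size n p" "k = 0 \<longrightarrow> 1 \<le> p" "k = class_size n p \<longrightarrow> 2 * class_size n p + p \<le> n"
    and ne: "play k (class_word n p D) \<noteq> class_word n p D"
    using assms(2) unfolding legal_play_def left_open_def right_open_def by auto
  have c2: "2 * class_size n p + p \<le> n + 1" using class_size_bound[of n p] assms(1) by linarith
  have pos: "1 \<le> 2 * k + p" using k(2) by (cases k) auto
  have vn: "2 * k + p - 1 < n"
  proof (cases "k = class_size n p")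
    case True then show ?thesis using k(3) pos by linarith
  next
    case False then show ?thesis using k(1) c2 pos by linarith
  qed
  have e0: "2 * k + p - 1 + 1 = 2 * k + p" using pos by simp
  have e1: "(2 * k + p - 1 + 1) mod 2 = p" and e2: "(2 * k + p - 1 + 1) div 2 = k"
    unfolding e0 using assms(1) by auto
  have "path_nbr n (2 * k + p - 1) - D \<noteq> {}"
  proof
    assume "path_nbr n (2 * k + p - 1) - D = {}"
    then have "D \<union> path_nbr n (2 * k + p - 1) = D" by blast
    then show False using class_word_dominate[OF vn assms(1), of D] e1 e2 ne by simp
  qed
  then show ?thesis using vn e1 e2 by simp
qed

lemma word_pot_all_False: "word_pot a 0 (replicate m False) b = 0"
  by (induction m arbitrary: a) auto

lemma class_word_terminal:
  assumes "2 \<le> n" "p \<le> 1" "tg_moves {0..<n} (path_nbr n) D = {}"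
  shows "class_word n p D = replicate (class_size n p) False"
proof (rule nth_equalityI)
  show "length (class_word n p D) = length (replicate (class_size n p) False)" by simp
  fix i assume "i < length (class_word n p D)"
  then have i: "i < class_size n p" by simp
  define x where "x = 2 * i + p"
  have xn: "x < n" using class_size_less[OF i assms(2)] unfolding x_def .
  define v where "v = (if x + 1 < n then x + 1 else x - 1)"
  have vn: "v < n" and xv: "x \<in> path_nbr n v" using xn assms(1) unfolding v_def
    by (auto simp: path_nbr_iff)
  then have "x \<in> D" using assms(3) by auto
  then show "class_word n p D ! i = replicate (class_size n p) False ! i"
    using nth_class_word[OF i] i unfolding x_def by simp
qed

lemma path_pot_terminal:
  assumes "2 \<le> n" "tg_moves {0..<n} (path_nbr n) D = {}"
  shows "path_pot n D = 0"
  unfolding path_pot_def class_pot_def using class_word_terminal[OF assms(1) _ assms(2)]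
    by (simp add: word_pot_all_False)

lemma path_pot_move:
  assumes "v < n"
  shows "path_pot n (D \<union> path_nbr n v) + class_pot n ((v + 1) mod 2) D =
    path_pot n D +
      class_word_pot n ((v + 1) mod 2) (play ((v + 1) div 2) (class_word n ((v + 1) mod 2) D))"
proof -
  define q where "q = (v + 1) mod 2"
  have q1: "q \<le> 1" unfolding q_def by simp
  have a: "class_pot n q (D \<union> path_nbr n v)
      = class_word_pot n q (play ((v + 1) div 2) (class_word n q D))"
    unfolding class_pot_def using class_word_dominate[OF assms q1, of D] unfolding q_def by simp
  have b: "class_pot n (1 - q) (D \<union> path_nbr n v) = class_pot n (1 - q) D"
  proof -
    have "q \<noteq> 1 - q" using q1 by (cases q) auto
    then have "(v + 1) mod 2 \<noteq> 1 - q" unfolding q_def by simp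
    then show ?thesis unfolding class_pot_def using class_word_dominate[OF assms, of "1 - q" D] q1
      by simp
  qed
  show ?thesis
    using path_pot_split[OF q1, of n D] path_pot_split[OF q1, of n "D \<union> path_nbr n v"] a b
    unfolding q_def[symmetric] by linarith
qed

lemma path_pot_move_bounds:
  assumes "v < n" "path_nbr n v - D \<noteq> {}"
  shows "path_pot n (D \<union> path_nbr n v) + 1 \<le> path_pot n D \<and> path_pot n D
      \<le> path_pot n (D \<union> path_nbr n v) + 3"
  using word_pot_play_bounds[OF legal_play_of_move[OF assms]] path_pot_move[OF assms(1), of D]
    unfolding class_pot_def by linarith

lemma move_of_play:
  assumes "p \<le> 1" "legal_play (left_open p) (right_open n p) (class_word n p D) k"
  shows "\<exists>v\<in>{0..<n}. path_nbr n v - D \<noteq> {} \<and>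
     path_pot n (D \<union> path_nbr n v) + class_pot n p D =
       path_pot n D + class_word_pot n p (play k (class_word n p D))"
proof -
  note L = move_of_legal_play[OF assms]
  show ?thesis using L path_pot_move[of "2 * k + p - 1" n D]
    by (intro bexI[of _ "2 * k + p - 1"]) auto
qed

lemma class_word_has_True:
  assumes "tg_moves {0..<n} (path_nbr n) D \<noteq> {}"
  shows "\<exists>p i. p \<le> 1 \<and> i < class_size n p \<and> class_word n p D ! i"
proof -
  obtain v x where "v < n" "x \<in> path_nbr n v" "x \<notin> D" using assms by auto
  then have xn: "x < n" "x \<notin> D" by (auto simp: path_nbr_iff)
  have "x div 2 < class_size n (x mod 2)" using less_class_size[of "x div 2" "x mod 2" n] xn(1)
    by simp
  moreover have "2 * (x div 2) + x mod 2 = x" by simp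
  ultimately show ?thesis using nth_class_word[of "x div 2" n "x mod 2" D] xn
    by (intro exI[of _ "x mod 2"] exI[of _ "x div 2"]) auto
qed

lemma class_word_playable: "3 \<le> n \<Longrightarrow> p \<le> 1 \<Longrightarrow> 2 \<le> length (class_word n p D) \<or> left_open p
    \<or> right_open n p"
proof (cases "p = 0")
  case True
  assume "3 \<le> n"
  then have "4 div 2 \<le> (n + 1 - p) div 2" using True by (intro div_le_mono) simp
  then have "2 \<le> class_size n p" unfolding class_size_def by simp
  then show ?thesis by simp
qed (simp add: left_open_def)

lemma path_pot_drop_ge2:
  assumes "3 \<le> n" "tg_moves {0..<n} (path_nbr n) D \<noteq> {}"
  shows "\<exists>v\<in>{0..<n}. path_nbr n v - D \<noteq> {} \<and> path_pot n (D \<union> path_nbr n v) + 2 \<le> path_pot n D"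
proof -
  obtain p i where p: "p \<le> 1" "i < class_size n p" "class_word n p D ! i"
    using class_word_has_True[OF assms(2)] by blast
  have il: "i < length (class_word n p D)" using p(2) by simp
  from word_play_drop_ge2[OF il p(3) class_word_playable[OF assms(1) p(1)]]
    obtain k where k: "legal_play (left_open p) (right_open n p) (class_word n p D) k"
    "class_word_pot n p (play k (class_word n p D)) + 2 \<le> class_word_pot n p (class_word n p D)"
    by blast
  from move_of_play[OF p(1) k(1)] obtain v where v: "v\<in>{0..<n}" "path_nbr n v - D \<noteq> {}"
    "path_pot n (D \<union> path_nbr n v) + class_pot n p D
        = path_pot n D + class_word_pot n p (play k (class_word n p D))"
    by blast
  have "path_pot n (D \<union> path_nbr n v) + 2 \<le> path_pot n D" using v(3) k(2) unfolding class_pot_def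
    by linarith
  then show ?thesis using v(1,2) by blast
qed

lemma path_pot_drop_le2:
  assumes "3 \<le> n" "tg_moves {0..<n} (path_nbr n) D \<noteq> {}"
  shows "\<exists>v\<in>{0..<n}. path_nbr n v - D \<noteq> {} \<and> path_pot n D \<le> path_pot n (D \<union> path_nbr n v) + 2"
proof -
  obtain p i where p: "p \<le> 1" "i < class_size n p" "class_word n p D ! i"
    using class_word_has_True[OF assms(2)] by blast
  have il: "i < length (class_word n p D)" using p(2) by simp
  from word_play_drop_le2[OF il p(3) class_word_playable[OF assms(1) p(1)]]
    obtain k where k: "legal_play (left_open p) (right_open n p) (class_word n p D) k"
    "class_word_pot n p (class_word n p D) \<le> class_word_pot n p (play k (class_word n p D)) + 2"
    by blast
  from move_of_play[OF p(1) k(1)] obtain v where v: "v\<in>{0..<n}" "path_nbr n v - D \<noteq> {}"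
    "path_pot n (D \<union> path_nbr n v) + class_pot n p D
        = path_pot n D + class_word_pot n p (play k (class_word n p D))"
    by blast
  have "path_pot n D \<le> path_pot n (D \<union> path_nbr n v) + 2" using v(3) k(2) unfolding class_pot_def
    by linarith
  then show ?thesis using v(1,2) by blast
qed

lemma odd_path_pot_drop_1_3:
  assumes "odd (path_pot n D)"
  shows "(\<exists>v\<in>{0..<n}. path_nbr n v - D \<noteq> {} \<and> path_pot n D = path_pot n (D \<union> path_nbr n v) + 3) \<and>
         (\<exists>v\<in>{0..<n}. path_nbr n v - D \<noteq> {} \<and> path_pot n D = path_pot n (D \<union> path_nbr n v) + 1)"
proof -
  obtain p where p: "p \<le> 1" "odd (class_pot n p D)"
    using assms unfolding path_pot_def by (metis odd_add le_numeral_extra(4) zero_le)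
  then have "odd (class_word_pot n p (class_word n p D))" unfolding class_pot_def by simp
  from odd_word_play_drop_1_3[OF this] obtain k k' where
    k: "legal_play (left_open p) (right_open n p) (class_word n p D) k"
      "class_word_pot n p (class_word n p D) = class_word_pot n p (play k (class_word n p D)) + 3"
    and k': "legal_play (left_open p) (right_open n p) (class_word n p D) k'"
      "class_word_pot n p (class_word n p D) = class_word_pot n p (play k' (class_word n p D)) + 1"
    by blast
  obtain v where v: "v\<in>{0..<n}" "path_nbr n v - D \<noteq> {}"
    "path_pot n (D \<union> path_nbr n v) + class_pot n p D
        = path_pot n D + class_word_pot n p (play k (class_word n p D))"
    using move_of_play[OF p(1) k(1)] by blast
  obtain v' where v': "v'\<in>{0..<n}" "path_nbr n v' - D \<noteq> {}"
    "path_pot n (D \<union> path_nbr n v') + class_pot n p D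
        = path_pot n D + class_word_pot n p (play k' (class_word n p D))"
    using move_of_play[OF p(1) k'(1)] by blast
  have "path_pot n D = path_pot n (D \<union> path_nbr n v) + 3" using v(3) k(2) unfolding class_pot_def
    by linarith
  moreover have "path_pot n D = path_pot n (D \<union> path_nbr n v') + 1" using v'(3) k'(2)
    unfolding class_pot_def by linarith
  ultimately show ?thesis using v v' by blast
qed

lemma path_tg_potential:
  assumes "3 \<le> n"
  shows "tg_potential {0..<n} (path_nbr n) (path_pot n)"
proof
  show "path_nbr n v \<subseteq> {0..<n}" for v by (auto simp: path_nbr_iff)
  show "path_pot n D = 0" if "tg_moves {0..<n} (path_nbr n) D = {}" for D
    using path_pot_terminal[OF _ that] assms by simp
  show "path_pot n (D \<union> path_nbr n v) + 1 \<le> path_pot n D \<and> path_pot n D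
      \<le> path_pot n (D \<union> path_nbr n v) + 3"
    if "v \<in> tg_moves {0..<n} (path_nbr n) D" for D v
    using path_pot_move_bounds[of v n D] that by simp
  show "\<exists>v\<in>tg_moves {0..<n} (path_nbr n) D. path_pot n (D \<union> path_nbr n v) + 2 \<le> path_pot n D"
    if "tg_moves {0..<n} (path_nbr n) D \<noteq> {}" for D
    using path_pot_drop_ge2[OF assms that] by blast
  show "\<exists>v\<in>tg_moves {0..<n} (path_nbr n) D. path_pot n D \<le> path_pot n (D \<union> path_nbr n v) + 2"
    if "tg_moves {0..<n} (path_nbr n) D \<noteq> {}" for D
    using path_pot_drop_le2[OF assms that] by blast
  show "\<exists>v\<in>tg_moves {0..<n} (path_nbr n) D. path_pot n D = path_pot n (D \<union> path_nbr n v) + 3"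
    if "odd (path_pot n D)" for D
    using odd_path_pot_drop_1_3[OF that] by blast
  show "\<exists>v\<in>tg_moves {0..<n} (path_nbr n) D. path_pot n D = path_pot n (D \<union> path_nbr n v) + 1"
    if "odd (path_pot n D)" for D
    using odd_path_pot_drop_1_3[OF that] by blast
qed simp

lemma class_pot_empty: "class_pot n p {} = run_pot (class_size n p) (left_open p) (right_open n p)"
  unfolding class_pot_def class_word_def by (simp add: map_replicate_const word_pot_all_True)

lemma class_word_other_class: "v mod 2 \<noteq> p \<Longrightarrow> p \<le> 1 \<Longrightarrow> class_word n p {v}
    = replicate (class_size n p) True"
proof (rule nth_equalityI)
  assume a: "v mod 2 \<noteq> p" "p \<le> 1"
  fix i assume "i < length (class_word n p {v})"
  then have i: "i < class_size n p" by simp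
  have "2 * i + p \<noteq> v" using a by auto
  then show "class_word n p {v} ! i = replicate (class_size n p) True ! i"
    using nth_class_word[OF i] i by simp
qed simp

lemma class_pot_other_class: "v mod 2 \<noteq> p \<Longrightarrow> p \<le> 1 \<Longrightarrow> class_pot n p {v}
    = run_pot (class_size n p) (left_open p) (right_open n p)"
  unfolding class_pot_def using class_word_other_class by (simp add: word_pot_all_True)

lemma class_word_singleton: "i < class_size n p \<Longrightarrow>
   class_word n p {2 * i + p} = replicate i True @ False # replicate (class_size n p - i - 1) True"
proof (rule nth_equalityI)
  assume i: "i < class_size n p"
  show "length (class_word n p {2 * i + p})
      = length (replicate i True @ False # replicate (class_size n p - i - 1) True)"
    using i by simp
  fix j assume "j < length (class_word n p {2 * i + p})"
  then have j: "j < class_size n p" by simp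
  show "class_word n p {2 * i + p} ! j =
      (replicate i True @ False # replicate (class_size n p - i - 1) True) ! j"
    using nth_class_word[OF j] j i by (auto simp: nth_append nth_Cons' )
qed

lemma class_pot_singleton: "i < class_size n p \<Longrightarrow>
   class_pot n p {2 * i + p} =
     run_pot i (left_open p) True + run_pot (class_size n p - i - 1) True (right_open n p)"
  unfolding class_pot_def using class_word_singleton
    by (simp add: word_pot_replicate_True word_pot_all_True)

lemma class_size_even: "n + 1 - p = 2 * c \<Longrightarrow> class_size n p = c" unfolding class_size_def by simp
lemma class_size_odd: "n + 1 - p = 2 * c + 1 \<Longrightarrow> class_size n p = c" unfolding class_size_def by simp

lemma left_open_0: "left_open 0 = False" and left_open_1: "left_open 1 = True"
  by (simp_all add: left_open_def)

lemma path_pot_6m: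
  assumes n: "n = 6 * m" and m: "1 \<le> m"
  shows "path_pot n {} = 8 * m \<and> path_pot n {2} = 8 * m"
proof
  have c0: "class_size n 0 = 3 * m" by (rule class_size_odd) (simp add: n)
  have c1: "class_size n 1 = 3 * m" by (rule class_size_even) (simp add: n)
  have r0: "right_open n 0" and r1: "\<not> right_open n 1" using c0 c1 n unfolding right_open_def
    by simp_all
  have "path_pot n {} = run_pot (3 * m) False True + run_pot (3 * m) True False"
    unfolding path_pot_def class_pot_empty c0 c1 using r0 r1 left_open_0 left_open_1 by simp
  also have "\<dots> = 8 * m" by (simp only: run_pot_add_mult3 run_pot_mult3; simp add: run_pot_def)
  finally show "path_pot n {} = 8 * m" .
  have e: "3 * m - 1 - 1 = 3 * (m - 1) + 1" using m by simp
  have s1: "class_pot n 0 {2} = run_pot 1 (left_open 0) True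
      + run_pot (class_size n 0 - 1 - 1) True (right_open n 0)"
    using class_pot_singleton[of 1 n 0] c0 m by simp
  have o1: "class_pot n 1 {2} = run_pot (class_size n 1) (left_open 1) (right_open n 1)"
    using class_pot_other_class[of 2 1 n] by simp
  have "path_pot n {2} = run_pot 1 False True + run_pot (3 * (m - 1) + 1) True True
      + run_pot (3 * m) True False"
    unfolding path_pot_def s1 o1 using r0 r1 left_open_0 left_open_1 c0 c1 e by simp
  also have "\<dots> = 8 * m"
    using m by (simp only: run_pot_add_mult3 run_pot_mult3; simp add: run_pot_def)
  finally show "path_pot n {2} = 8 * m" .
qed

lemma path_pot_6m1:
  assumes n: "n = 6 * m + 1" and m: "1 \<le> m"
  shows "path_pot n {} = 8 * m + 2 \<and> path_pot n {3} = 8 * m + 2"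
proof
  have c0: "class_size n 0 = 3 * m + 1" by (rule class_size_even) (simp add: n)
  have c1: "class_size n 1 = 3 * m" by (rule class_size_odd) (simp add: n)
  have r0: "\<not> right_open n 0" and r1: "right_open n 1" using c0 c1 n unfolding right_open_def
    by simp_all
  have "path_pot n {} = run_pot (3 * m + 1) False False + run_pot (3 * m) True True"
    unfolding path_pot_def class_pot_empty c0 c1 using r0 r1 left_open_0 left_open_1 by simp
  also have "\<dots> = 8 * m + 2" by (simp only: run_pot_add_mult3 run_pot_mult3; simp add: run_pot_def)
  finally show "path_pot n {} = 8 * m + 2" .
  have e: "3 * m - 1 - 1 = 3 * (m - 1) + 1" using m by simp
  have s1: "class_pot n 1 {3} = run_pot 1 (left_open 1) True
      + run_pot (class_size n 1 - 1 - 1) True (right_open n 1)"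
    using class_pot_singleton[of 1 n 1] c1 m by simp
  have o1: "class_pot n 0 {3} = run_pot (class_size n 0) (left_open 0) (right_open n 0)"
    using class_pot_other_class[of 3 0 n] by simp
  have "path_pot n {3} = run_pot (3 * m + 1) False False
      + (run_pot 1 True True + run_pot (3 * (m - 1) + 1) True True)"
    unfolding path_pot_def s1 o1 using r0 r1 left_open_0 left_open_1 c0 c1 e by simp
  also have "\<dots> = 8 * m + 2"
    using m by (simp only: run_pot_add_mult3 run_pot_mult3; simp add: run_pot_def)
  finally show "path_pot n {3} = 8 * m + 2" .
qed

lemma path_pot_6m3:
  assumes n: "n = 6 * m + 3"
  shows "path_pot n {} = 8 * m + 4 \<and> path_pot n {0} = 8 * m + 4"
proof
  have c0: "class_size n 0 = 3 * m + 2" by (rule class_size_even) (simp add: n)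
  have c1: "class_size n 1 = 3 * m + 1" by (rule class_size_odd) (simp add: n)
  have r0: "\<not> right_open n 0" and r1: "right_open n 1" using c0 c1 n unfolding right_open_def
    by simp_all
  have "path_pot n {} = run_pot (3 * m + 2) False False + run_pot (3 * m + 1) True True"
    unfolding path_pot_def class_pot_empty c0 c1 using r0 r1 left_open_0 left_open_1 by simp
  also have "\<dots> = 8 * m + 4" by (simp only: run_pot_add_mult3 run_pot_mult3; simp add: run_pot_def)
  finally show "path_pot n {} = 8 * m + 4" .
  have s1: "class_pot n 0 {0} = run_pot 0 (left_open 0) True
      + run_pot (class_size n 0 - 0 - 1) True (right_open n 0)"
    using class_pot_singleton[of 0 n 0] c0 by simp
  have o1: "class_pot n 1 {0} = run_pot (class_size n 1) (left_open 1) (right_open n 1)"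
    using class_pot_other_class[of 0 1 n] by simp
  have "path_pot n {0} = run_pot (3 * m + 1) True False + run_pot (3 * m + 1) True True"
    unfolding path_pot_def s1 o1 using r0 r1 left_open_0 left_open_1 c0 c1 by simp
  also have "\<dots> = 8 * m + 4" by (simp only: run_pot_add_mult3 run_pot_mult3; simp add: run_pot_def)
  finally show "path_pot n {0} = 8 * m + 4" .
qed

lemma path_pot_6m5:
  assumes n: "n = 6 * m + 5"
  shows "path_pot n {} = 8 * m + 7 \<and> path_pot n {0} = 8 * m + 6"
proof
  have c0: "class_size n 0 = 3 * m + 3" by (rule class_size_even) (simp add: n)
  have c1: "class_size n 1 = 3 * m + 2" by (rule class_size_odd) (simp add: n)
  have r0: "\<not> right_open n 0" and r1: "right_open n 1" using c0 c1 n unfolding right_open_def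
    by simp_all
  have "path_pot n {} = run_pot (3 * m + 3) False False + run_pot (3 * m + 2) True True"
    unfolding path_pot_def class_pot_empty c0 c1 using r0 r1 left_open_0 left_open_1 by simp
  also have "\<dots> = 8 * m + 7" by (simp only: run_pot_add_mult3 run_pot_mult3; simp add: run_pot_def)
  finally show "path_pot n {} = 8 * m + 7" .
  have s1: "class_pot n 0 {0} = run_pot 0 (left_open 0) True
      + run_pot (class_size n 0 - 0 - 1) True (right_open n 0)"
    using class_pot_singleton[of 0 n 0] c0 by simp
  have o1: "class_pot n 1 {0} = run_pot (class_size n 1) (left_open 1) (right_open n 1)"
    using class_pot_other_class[of 0 1 n] by simp
  have "path_pot n {0} = run_pot (3 * m + 2) True False + run_pot (3 * m + 2) True True"
    unfolding path_pot_def s1 o1 using r0 r1 left_open_0 left_open_1 c0 c1 by simp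
  also have "\<dots> = 8 * m + 6" by (simp only: run_pot_add_mult3 run_pot_mult3; simp add: run_pot_def)
  finally show "path_pot n {0} = 8 * m + 6" .
qed

lemma path_pot_singleton_ge:
  assumes "3 \<le> n" "n mod 6 \<notin> {2, 4}"
  shows "\<exists>v<n. path_pot n {} div 2 \<le> path_pot n {v} div 2"
proof -
  define m where "m = n div 6"
  have n: "n = 6 * m + n mod 6" unfolding m_def by simp
  have "n mod 6 < 6" by simp
  then consider "n mod 6 = 0" | "n mod 6 = 1" | "n mod 6 = 3" | "n mod 6 = 5"
    using assms(2) by fastforce
  then show ?thesis
  proof cases
    case 1
    then show ?thesis using path_pot_6m[of n m] n assms(1) by (intro exI[of _ 2]) simp
  next
    case 2
    then show ?thesis using path_pot_6m1[of n m] n assms(1) by (intro exI[of _ 3]) simp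
  next
    case 3
    then show ?thesis using path_pot_6m3[of n m] n by (intro exI[of _ 0]) simp
  next
    case 4
    then show ?thesis using path_pot_6m5[of n m] n by (intro exI[of _ 0]) simp
  qed
qed

theorem lemma3p8:
  fixes n :: nat
  assumes "n \<ge> 3" and "n mod 6 \<notin> {2, 4}"
  shows "\<not> gamma_tg_critical {0..<n} (path_nbr n)"
proof
  assume crit: "gamma_tg_critical {0..<n} (path_nbr n)"
  obtain v where v: "v < n" "path_pot n {} div 2 \<le> path_pot n {v} div 2"
    using path_pot_singleton_ge[OF assms] by blast
  interpret tg_potential "{0..<n}" "path_nbr n" "path_pot n"
    using path_tg_potential[OF assms(1)] .
  have g: "gamma_tg {0..<n} (path_nbr n) = path_pot n {} div 2"
    unfolding gamma_tg_def by (simp add: tg_val_eq)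
  have gv: "gamma_tg_cond {0..<n} (path_nbr n) v = path_pot n {v} div 2"
    unfolding gamma_tg_cond_def using v(1) by (simp add: tg_val_eq)
  have "gamma_tg_cond {0..<n} (path_nbr n) v < gamma_tg {0..<n} (path_nbr n)"
    using crit v(1) unfolding gamma_tg_critical_def by simp
  then show False using g gv v(2) by simp
qed

end
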